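(* Let $B_{n,k}=[x^n]\,\frac{1+3x^2}{1+x^2}\left(\frac{x}{1+x^2}\right)^k$ be the coefficient array of the Boubaker polynomials (the case $r=3$ of the restricted Chebyshev–Boubaker polynomials). Then for all $n\ge 0$, $B_{2n,n}=0^n$, i.e. $B_{0,0}=1$ and $B_{2n,n}=0$ for $n\ge 1$.
   Context: $[x^n]h(x)$ denotes the coefficient of $x^n$ in $h(x)$; $0^n$ is $1$ for $n=0$ and $0$ for $n>0$. The Boubaker polynomials are $B_n(x)=\sum_k B_{n,k}x^k$. *)

theory Defs
  imports "HOL-Computational_Algebra.Formal_Power_Series"
begin

definition boubaker_gf :: "nat \<Rightarrow> rat fps" where
  "boubaker_gf k = (1 + 3 * fps_X ^ 2) / (1 + fps_X ^ 2) * (fps_X / (1 + fps_X ^ 2)) ^ k"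

definition boubaker_coeff :: "nat \<Rightarrow> nat \<Rightarrow> rat" where
  "boubaker_coeff n k = fps_nth (boubaker_gf k) n"

end

theory Submission
  imports Defs
begin

unbundle fps_syntax

text \<open>Because \<open>x/(1+x^2)\<close> has order one, \<open>B(2n,n)\<close> is the coefficient of \<open>x^n\<close> in
  \<open>(1+3x^2)/(1+x^2)^(n+1)\<close>. The coefficients of \<open>(1+x^2)^-(k+1)\<close> are \<open>(-1)^j (k+j choose j)\<close>
  at \<open>x^(2j)\<close> and vanish at odd powers, so the claim is trivial for odd \<open>n\<close>, and for
  \<open>n = 2m > 0\<close> it reduces to the absorption identity \<open>(3m choose m) = 3 (3m-1 choose m-1)\<close>.\<close>

definition inverse_one_plus_X2_power :: "nat \<Rightarrow> 'a::comm_ring_1 fps" where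
  \<comment> \<open>the series of \<open>(1 + x^2)^-(k+1)\<close>, note the shift by one\<close>
  "inverse_one_plus_X2_power k =
     Abs_fps (\<lambda>j. if even j then (-1) ^ (j div 2) * of_nat (k + j div 2 choose (j div 2)) else 0)"

lemma inverse_one_plus_X2_power_nth_even:
  "inverse_one_plus_X2_power k $ (2 * m) = (-1) ^ m * of_nat (k + m choose m)"
  by (simp add: inverse_one_plus_X2_power_def)

lemma inverse_one_plus_X2_power_nth_odd:
  "odd j \<Longrightarrow> inverse_one_plus_X2_power k $ j = 0"
  by (simp add: inverse_one_plus_X2_power_def)

lemma nat_parity_cases:
  obtains "j = 0" | m where "j = 2 * m + 1" | m where "j = 2 * Suc m"
  by (metis oddE evenE not0_implies_Suc mult_0_right)

lemma fps_nth_mult_one_plus_X2: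
  "(f * (1 + fps_X ^ 2)) $ j = f $ j + (if j < 2 then 0 else f $ (j - 2))"
  for f :: "'a::comm_ring_1 fps"
  by (simp add: distrib_left fps_X_power_mult_right_nth)

lemma inverse_one_plus_X2_power_0_mult:
  "inverse_one_plus_X2_power 0 * (1 + fps_X ^ 2) = (1 :: 'a::comm_ring_1 fps)"
proof (rule fps_ext)
  fix j
  show "(inverse_one_plus_X2_power 0 * (1 + fps_X ^ 2)) $ j = (1 :: 'a fps) $ j"
  proof (cases j rule: nat_parity_cases)
    case 1
    then show ?thesis
      by (simp add: fps_nth_mult_one_plus_X2 inverse_one_plus_X2_power_def)
  next
    case (2 m)
    then show ?thesis
      by (simp add: fps_nth_mult_one_plus_X2 inverse_one_plus_X2_power_nth_odd)
  next
    case (3 m)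
    have "(inverse_one_plus_X2_power 0 * (1 + fps_X ^ 2)) $ j =
        inverse_one_plus_X2_power 0 $ (2 * Suc m) + (inverse_one_plus_X2_power 0 $ (2 * m) :: 'a)"
      using 3 by (simp add: fps_nth_mult_one_plus_X2)
    then show ?thesis
      unfolding 3 inverse_one_plus_X2_power_nth_even by simp
  qed
qed

lemma inverse_one_plus_X2_power_Suc_mult:
  "inverse_one_plus_X2_power (Suc k) * (1 + fps_X ^ 2) =
     (inverse_one_plus_X2_power k :: 'a::comm_ring_1 fps)"
proof (rule fps_ext)
  fix j
  show "(inverse_one_plus_X2_power (Suc k) * (1 + fps_X ^ 2)) $ j =
          (inverse_one_plus_X2_power k :: 'a fps) $ j"
  proof (cases j rule: nat_parity_cases)
    case 1
    then show ?thesis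
      by (simp add: fps_nth_mult_one_plus_X2 inverse_one_plus_X2_power_def)
  next
    case (2 m)
    then show ?thesis
      by (simp add: fps_nth_mult_one_plus_X2 inverse_one_plus_X2_power_nth_odd)
  next
    case (3 m)
    have pascal: "Suc k + Suc m choose Suc m = (Suc k + m choose m) + (k + Suc m choose Suc m)"
      by simp
    have "(inverse_one_plus_X2_power (Suc k) * (1 + fps_X ^ 2)) $ j =
        inverse_one_plus_X2_power (Suc k) $ (2 * Suc m) + inverse_one_plus_X2_power (Suc k) $ (2 * m)"
      using 3 by (simp add: fps_nth_mult_one_plus_X2)
    then show ?thesis
      unfolding 3 inverse_one_plus_X2_power_nth_even pascal by (simp add: algebra_simps)
  qed
qed

lemma one_plus_X2_power_mult_inverse:
  "(1 + fps_X ^ 2) ^ Suc k * inverse_one_plus_X2_power k = (1 :: 'a::comm_ring_1 fps)"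
proof (induction k)
  case 0
  then show ?case
    using inverse_one_plus_X2_power_0_mult by (simp add: mult.commute)
next
  case (Suc k)
  have "(1 + fps_X ^ 2) ^ Suc (Suc k) * inverse_one_plus_X2_power (Suc k)
      = (1 + fps_X ^ 2) ^ Suc k * (inverse_one_plus_X2_power (Suc k) * (1 + fps_X ^ 2) :: 'a fps)"
    by (simp add: mult_ac)
  also have "\<dots> = 1"
    by (simp only: inverse_one_plus_X2_power_Suc_mult Suc.IH)
  finally show ?case .
qed

lemma inverse_one_plus_X2_power_eq:
  "inverse ((1 + fps_X ^ 2) ^ Suc k) = (inverse_one_plus_X2_power k :: 'a::field fps)"
  by (rule fps_inverse_unique) (rule one_plus_X2_power_mult_inverse)

lemma boubaker_gf_eq:
  "boubaker_gf k = fps_X ^ k * ((1 + 3 * fps_X ^ 2) * inverse_one_plus_X2_power k)"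
proof -
  let ?D = "1 + fps_X ^ 2 :: rat fps"
  have "boubaker_gf k = (1 + 3 * fps_X ^ 2) * inverse ?D * (fps_X * inverse ?D) ^ k"
    unfolding boubaker_gf_def by (simp add: fps_divide_unit)
  also have "\<dots> = fps_X ^ k * ((1 + 3 * fps_X ^ 2) * inverse ?D ^ Suc k)"
    by (simp add: power_mult_distrib algebra_simps)
  finally show ?thesis
    by (simp only: fps_inverse_power [symmetric] inverse_one_plus_X2_power_eq)
qed

lemma boubaker_coeff_add:
  "boubaker_coeff (k + j) k =
     inverse_one_plus_X2_power k $ j + (if j < 2 then 0 else 3 * inverse_one_plus_X2_power k $ (j - 2))"
  by (simp add: boubaker_coeff_def boubaker_gf_eq fps_X_power_mult_nth distrib_right mult.assoc
      numeral_fps_const)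

lemma binomial_3m_absorption: "3 * m + 3 choose Suc m = 3 * (3 * m + 2 choose m)"
proof -
  have "Suc m * (3 * m + 3 choose Suc m) = Suc m * (3 * (3 * m + 2 choose m))"
    using times_binomial_minus1_eq [of "Suc m" "3 * m + 3"]
    by (simp add: algebra_simps del: binomial_Suc_Suc)
  then show ?thesis
    by (simp only: mult_cancel_left) simp
qed

theorem mainTheorem4:
  fixes n :: nat
  shows "boubaker_coeff (2 * n) n = (0::rat) ^ n"
proof -
  have B: "boubaker_coeff (2 * n) n =
      inverse_one_plus_X2_power n $ n + (if n < 2 then 0 else 3 * inverse_one_plus_X2_power n $ (n - 2))"
    using boubaker_coeff_add [of n n] by (simp add: mult_2)
  show ?thesis
  proof (cases n rule: nat_parity_cases)
    case 1
    then show ?thesis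
      unfolding B using inverse_one_plus_X2_power_nth_even [of n 0] by simp
  next
    case (2 m)
    then show ?thesis
      unfolding B by (simp add: inverse_one_plus_X2_power_nth_odd)
  next
    case (3 m)
    then have idx: "n + Suc m = 3 * m + 3" "n + m = 3 * m + 2"
      by simp_all
    have "boubaker_coeff (2 * n) n =
        inverse_one_plus_X2_power n $ (2 * Suc m) + 3 * inverse_one_plus_X2_power n $ (2 * m)"
      unfolding B using 3 by simp
    also have "\<dots> = (-1) ^ Suc m * of_nat (3 * m + 3 choose Suc m)
                      + 3 * ((-1) ^ m * of_nat (3 * m + 2 choose m))"
      by (simp only: inverse_one_plus_X2_power_nth_even idx)
    also have "\<dots> = 0"
      by (simp only: binomial_3m_absorption) simp
    finally show ?thesis
      using 3 by simp
  qed
qed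

end
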